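(* Let $g,h\in\mathbb F_q[x,y]$ be nonzero with $(x^l-1)(y^m-1)=g(x,y)h(x,y)$ in $\mathbb F_q[x,y]$, and let $C=\langle g\rangle$, $C^*=\langle h^*\rangle$ be the ideals of $\mathfrak R$ generated by the images of $g$ and $h^*$. Assume $C\neq\{0\}$ and $C^*\ne\{0\}$. Then $C^*\subseteq C$ if and only if $g(x,y)g^*(x,y)$ divides $(x^l-1)(y^m-1)$ in $\mathbb F_q[x,y]$.
   Context: $\mathfrak R=\mathbb F_q[x,y]/\langle x^l-1,y^m-1\rangle$. For nonzero $f\in\mathbb F_q[x,y]$ with $l_1=\deg_x f$, $l_2=\deg_y f$, the reciprocal polynomial is $f^*(x,y)=x^{l_1}y^{l_2}f(x^{-1},y^{-1})$. *)

theory Defs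
  imports "HOL-Computational_Algebra.Polynomial"
begin

text \<open>Bivariate polynomials F[x,y] are represented as F[x][y], i.e. 'a poly poly:
  the outer variable is y, the coefficients are univariate polynomials in x.\<close>

definition bvx :: "'a::comm_ring_1 poly poly" where
  "bvx = [:[:0, 1:]:]"

definition bvy :: "'a::comm_ring_1 poly poly" where
  "bvy = [:0, 1:]"

definition degx :: "'a::zero poly poly \<Rightarrow> nat" where
  "degx f = Max ((\<lambda>j. degree (coeff f j)) ` {..degree f})"

text \<open>Reciprocal f*(x,y) = x^{l1} y^{l2} f(1/x,1/y): the monomial c x^i y^j goes to c x^(l1-i) y^(l2-j).\<close>
definition recip :: "'a::comm_ring_1 poly poly \<Rightarrow> 'a poly poly" where
  "recip f = (\<Sum>i\<le>degx f. \<Sum>j\<le>degree f.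
      monom (monom (coeff (coeff f j) i) (degx f - i)) (degree f - j))"

definition Iset :: "nat \<Rightarrow> nat \<Rightarrow> 'a::comm_ring_1 poly poly set" where
  "Iset l m = {a * (bvx ^ l - 1) + b * (bvy ^ m - 1) | a b. True}"

text \<open>Elements of R = F[x,y]/<x^l-1,y^m-1> are cosets; cls l m p is the image of p in R.\<close>
definition cls :: "nat \<Rightarrow> nat \<Rightarrow> 'a::comm_ring_1 poly poly \<Rightarrow> 'a poly poly set" where
  "cls l m p = {q. p - q \<in> Iset l m}"

text \<open>The principal ideal of R generated by the image of f: {[f]*[a]} = {[f*a]}.\<close>
definition Rideal :: "nat \<Rightarrow> nat \<Rightarrow> 'a::comm_ring_1 poly poly \<Rightarrow> 'a poly poly set set" where
  "Rideal l m f = {cls l m (f * a) | a. True}"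

end

theory Submission
  imports Defs "HOL-Computational_Algebra.Field_as_Ring" "HOL-Computational_Algebra.Polynomial_Factorial"
begin

text \<open>
  By Gauss's lemma over the factorial ring \<open>F[x]\<close>, every factor of the polynomial
  \<open>(x^l - 1)(y^m - 1)\<close>, whose variables are separated, has separated variables itself:
  \<open>g = a(x) b(y)\<close> and \<open>h = a'(x) b'(y)\<close> with \<open>a a' = x^l - 1\<close> and \<open>b b' = y^m - 1\<close>.
  Reciprocals respect this splitting, and \<open>(x^n - 1)* = -(x^n - 1)\<close>, so \<open>g g*\<close> divides
  \<open>(x^l - 1)(y^m - 1)\<close> iff \<open>a\<close> divides \<open>a'*\<close> and \<open>b\<close> divides \<open>b'*\<close>.
  The same condition characterises \<open>h* \<in> \<langle>g\<rangle> + \<langle>x^l - 1, y^m - 1\<rangle>\<close>: since \<open>C* \<noteq> 0\<close>,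
  the degrees of \<open>a'*\<close> and \<open>b'*\<close> stay below \<open>l\<close> and \<open>m\<close>; reducing a congruence
  \<open>a'*(x) b'*(y) \<equiv> a(x) b(y) w\<close> modulo \<open>a(x)\<close>, which divides \<open>x^l - 1\<close>, and using that
  division by the monic \<open>y^m - 1\<close> has unique quotient and remainder, one gets \<open>a | a'*\<close>;
  exchanging \<open>x\<close> and \<open>y\<close> gives \<open>b | b'*\<close>.
\<close>

lemma map_poly_add:
  assumes "f 0 = 0" "\<And>x y. f (x + y) = f x + f y"
  shows "map_poly f (p + q) = map_poly f p + map_poly f q"
  by (intro poly_eqI) (simp add: coeff_map_poly assms)

lemma map_poly_diff:
  assumes "f 0 = 0" "\<And>x y. f (x - y) = f x - f y"
  shows "map_poly f (p - q) = map_poly f p - map_poly f q"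
  by (intro poly_eqI) (simp add: coeff_map_poly assms)

lemma map_poly_mult:
  fixes f :: "'a::comm_semiring_0 \<Rightarrow> 'b::comm_semiring_0"
  assumes "f 0 = 0" "\<And>x y. f (x + y) = f x + f y" "\<And>x y. f (x * y) = f x * f y"
  shows "map_poly f (p * q) = map_poly f p * map_poly f q"
proof (induction p)
  case (pCons a p)
  then show ?case
    by (simp add: map_poly_add[OF assms(1,2)] map_poly_smult map_poly_pCons assms)
qed simp

text \<open>
  \<open>poly_y v\<close> is \<open>v(y)\<close>, so \<open>[:u:] * poly_y v\<close> is the separated polynomial \<open>u(x) v(y)\<close>.
\<close>

definition poly_y :: "'a::zero poly \<Rightarrow> 'a poly poly" where
  "poly_y v = map_poly (\<lambda>c. [:c:]) v"

lemma coeff_poly_y: "coeff (poly_y v) n = [:coeff v n:]"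
  by (simp add: poly_y_def coeff_map_poly)

lemma degree_poly_y [simp]: "degree (poly_y v) = degree v"
  by (simp add: poly_y_def degree_map_poly)

lemma poly_y_0 [simp]: "poly_y 0 = 0"
  and poly_y_1 [simp]: "poly_y (1 :: 'a::comm_semiring_1 poly) = 1"
  by (simp_all add: poly_y_def)

lemma poly_y_eq_iff [simp]: "poly_y v = poly_y w \<longleftrightarrow> v = w"
  by (metis coeff_poly_y pCons_eq_iff poly_eq_iff)

lemma poly_y_add: "poly_y (v + w) = poly_y v + poly_y w"
  unfolding poly_y_def by (rule map_poly_add) auto

lemma poly_y_diff: "poly_y (v - w) = poly_y v - poly_y (w :: 'a::comm_ring poly)"
  unfolding poly_y_def by (rule map_poly_diff) auto

lemma poly_y_mult: "poly_y (v * w) = poly_y v * poly_y (w :: 'a::comm_semiring_0 poly)"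
  unfolding poly_y_def by (rule map_poly_mult) (auto simp: mult.commute)

lemma poly_y_power: "poly_y (v ^ n) = poly_y (v :: 'a::comm_semiring_1 poly) ^ n"
  by (induction n) (simp_all add: poly_y_mult)

lemma coeff_separated: "coeff ([:u:] * poly_y v) n = smult (coeff v n) u"
  by (simp add: coeff_poly_y mult.commute)

lemma separated_mult:
  "([:u:] * poly_y v) * ([:u':] * poly_y v') = [:u * u':] * poly_y (v * v')"
  by (simp add: poly_y_mult mult_ac)

definition swap_xy :: "'a::comm_ring_1 poly poly \<Rightarrow> 'a poly poly" where
  "swap_xy p = poly (map_poly poly_y p) bvx"

lemma coeff_swap_xy: "coeff (coeff (swap_xy p) i) j = coeff (coeff p j) i"
proof (induction p arbitrary: j)
  case (pCons c p)
  have "swap_xy (pCons c p) = poly_y c + bvx * swap_xy p"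
    by (simp add: swap_xy_def map_poly_pCons)
  moreover have "coeff (coeff (bvx * swap_xy p) i) j =
      (if j = 0 then 0 else coeff (coeff (swap_xy p) i) (j - 1))"
    by (simp add: bvx_def coeff_pCons split: nat.splits)
  ultimately show ?case
    by (simp add: coeff_poly_y coeff_pCons pCons.IH split: nat.splits)
qed (simp add: swap_xy_def)

lemma swap_xy_swap_xy [simp]: "swap_xy (swap_xy p) = p"
  by (simp add: poly_eq_iff coeff_swap_xy)

lemma swap_xy_mult: "swap_xy (p * q) = swap_xy p * swap_xy (q :: 'a::comm_ring_1 poly poly)"
  by (simp add: swap_xy_def map_poly_mult poly_y_add poly_y_mult)

lemma swap_xy_add: "swap_xy (p + q) = swap_xy p + swap_xy (q :: 'a::comm_ring_1 poly poly)"
  by (simp add: swap_xy_def map_poly_add poly_y_add)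

lemma swap_xy_diff: "swap_xy (p - q) = swap_xy p - swap_xy (q :: 'a::comm_ring_1 poly poly)"
  by (simp add: swap_xy_def map_poly_diff poly_y_diff)

lemma swap_xy_separated: "swap_xy ([:u:] * poly_y v) = [:v:] * poly_y u"
  by (simp add: poly_eq_iff coeff_swap_xy coeff_poly_y coeff_pCons split: nat.splits)

lemma swap_xy_const [simp]: "swap_xy [:u:] = poly_y u"
  using swap_xy_separated[of u 1] by simp

lemma swap_xy_poly_y [simp]: "swap_xy (poly_y v) = [:v:]"
  using swap_xy_separated[of 1 v] by simp

section \<open>Factors of separated polynomials\<close>

lemma factor_of_poly_y:
  fixes p q :: "'a::idom poly poly"
  assumes "p * q = poly_y w" "w \<noteq> 0"
  obtains v where "p = poly_y v"
proof -
  have pq: "swap_xy p * swap_xy q = [:w:]"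
    by (simp only: assms(1) swap_xy_poly_y flip: swap_xy_mult)
  then have "swap_xy p \<noteq> 0" "swap_xy q \<noteq> 0"
    using assms(2) by (metis mult_eq_0_iff pCons_eq_0_iff)+
  with pq have "degree (swap_xy p) = 0"
    by (metis add_is_0 degree_mult_eq degree_pCons_0)
  then have "p = swap_xy [:coeff (swap_xy p) 0:]"
    by (metis degree_0_id swap_xy_swap_xy)
  then show ?thesis
    using that by simp
qed

lemma poly_y_smult: "poly_y (smult c v) = [:[:c:]:] * poly_y v"
  by (simp add: poly_eq_iff coeff_poly_y mult.commute)

lemma content_poly_y:
  fixes v :: "'a::field_gcd poly"
  assumes "v \<noteq> 0"
  shows "content (poly_y v) = 1"
proof -
  have "content (poly_y v) dvd [:lead_coeff v:]"
    using content_dvd_coeff[of "poly_y v" "degree v"] by (simp add: coeff_poly_y)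
  moreover have "is_unit [:lead_coeff v:]"
    using assms by (simp add: is_unit_const_poly_iff dvd_field_iff)
  ultimately show ?thesis
    using dvd_unit_imp_unit is_unit_content_iff by blast
qed

lemma factor_of_separated_field_gcd:
  fixes g h :: "'a::field_gcd poly poly"
  assumes "g * h = [:u:] * poly_y v" "u \<noteq> 0" "v \<noteq> 0"
  obtains a b where "g = [:a:] * poly_y b"
proof -
  define c where "c = unit_factor (lead_coeff u)"
  have "primitive_part g * primitive_part h = primitive_part ([:u:] * poly_y v)"
    by (metis assms(1) primitive_part_mult)
  also have "\<dots> = poly_y (smult c v)"
    using assms(3) by (simp add: primitive_part_smult primitive_part_prim content_poly_y
        unit_factor_poly_def c_def poly_y_smult)
  finally obtain b where "primitive_part g = poly_y b"
    using factor_of_poly_y assms(2,3) by (metis c_def leading_coeff_0_iff smult_eq_0_iff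
        unit_factor_eq_0_iff)
  then have "g = [:content g:] * poly_y b"
    by (metis content_times_primitive_part smult_one mult_smult_left mult_1)
  then show ?thesis
    using that by blast
qed

text \<open>
  The library proves Gauss's lemma only over coefficient rings with a gcd structure, so it is
  applied to a copy of the field equipped with the trivial gcd structure of a field.
\<close>

typedef 'a gcd_field = "UNIV :: 'a::field set"
  morphisms of_gcd_field to_gcd_field by auto

setup_lifting type_definition_gcd_field

instantiation gcd_field :: (field) field
begin
lift_definition zero_gcd_field :: "'a gcd_field" is 0 .
lift_definition one_gcd_field :: "'a gcd_field" is 1 .
lift_definition plus_gcd_field :: "'a gcd_field \<Rightarrow> 'a gcd_field \<Rightarrow> 'a gcd_field" is "(+)" .
lift_definition minus_gcd_field :: "'a gcd_field \<Rightarrow> 'a gcd_field \<Rightarrow> 'a gcd_field" is "(-)" .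
lift_definition uminus_gcd_field :: "'a gcd_field \<Rightarrow> 'a gcd_field" is uminus .
lift_definition times_gcd_field :: "'a gcd_field \<Rightarrow> 'a gcd_field \<Rightarrow> 'a gcd_field" is "(*)" .
lift_definition inverse_gcd_field :: "'a gcd_field \<Rightarrow> 'a gcd_field" is inverse .
lift_definition divide_gcd_field :: "'a gcd_field \<Rightarrow> 'a gcd_field \<Rightarrow> 'a gcd_field" is "(/)" .
instance
  by standard (transfer; simp add: field_simps)+
end

instantiation gcd_field :: (field)
  "{unique_euclidean_ring, normalization_euclidean_semiring, normalization_semidom_multiplicative}"
begin
definition [simp]: "normalize_gcd_field = (normalize_field :: 'a gcd_field \<Rightarrow> _)"
definition [simp]: "unit_factor_gcd_field = (unit_factor_field :: 'a gcd_field \<Rightarrow> _)"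
definition [simp]: "modulo_gcd_field = (mod_field :: 'a gcd_field \<Rightarrow> _)"
definition [simp]: "euclidean_size_gcd_field = (euclidean_size_field :: 'a gcd_field \<Rightarrow> _)"
definition [simp]: "division_segment (x :: 'a gcd_field) = 1"
instance
  by standard (simp_all add: dvd_field_iff field_split_simps split: if_splits)
end

instantiation gcd_field :: (field) euclidean_ring_gcd
begin
definition "gcd_gcd_field = (Euclidean_Algorithm.gcd :: 'a gcd_field \<Rightarrow> _)"
definition "lcm_gcd_field = (Euclidean_Algorithm.lcm :: 'a gcd_field \<Rightarrow> _)"
definition "Gcd_gcd_field = (Euclidean_Algorithm.Gcd :: 'a gcd_field set \<Rightarrow> _)"
definition "Lcm_gcd_field = (Euclidean_Algorithm.Lcm :: 'a gcd_field set \<Rightarrow> _)"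
instance
  by standard (simp_all add: gcd_gcd_field_def lcm_gcd_field_def Gcd_gcd_field_def Lcm_gcd_field_def)
end

instance gcd_field :: (field) field_gcd ..

lemma map_poly_poly_mult:
  fixes f :: "'a::comm_semiring_0 \<Rightarrow> 'b::comm_semiring_0"
  assumes "f 0 = 0" "\<And>x y. f (x + y) = f x + f y" "\<And>x y. f (x * y) = f x * f y"
  shows "map_poly (map_poly f) (p * q) = map_poly (map_poly f) p * map_poly (map_poly f) q"
  by (rule map_poly_mult) (simp_all add: map_poly_add map_poly_mult assms)

lemma map_poly_poly_separated:
  fixes f :: "'a::comm_semiring_1 \<Rightarrow> 'b::comm_semiring_1"
  assumes "f 0 = 0" "\<And>x y. f (x + y) = f x + f y" "\<And>x y. f (x * y) = f x * f y"
  shows "map_poly (map_poly f) ([:u:] * poly_y v) = [:map_poly f u:] * poly_y (map_poly f v)"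
proof -
  have "map_poly (map_poly f) (poly_y v) = poly_y (map_poly f v)"
    by (simp add: poly_eq_iff coeff_map_poly coeff_poly_y coeff_pCons assms(1) split: nat.split)
  then show ?thesis
    by (simp del: mult_pCons_left add: map_poly_poly_mult assms map_poly_pCons)
qed

lemma factor_of_separated:
  fixes g h :: "'a::field poly poly"
  assumes "g * h = [:u:] * poly_y v" "u \<noteq> 0" "v \<noteq> 0"
  obtains a b where "g = [:a:] * poly_y b"
proof -
  let ?F = "map_poly (map_poly to_gcd_field)" and ?R = "map_poly (map_poly of_gcd_field)"
  have to_hom: "to_gcd_field 0 = 0" "to_gcd_field (x + y) = to_gcd_field x + to_gcd_field y"
    "to_gcd_field (x * y) = to_gcd_field x * to_gcd_field y" for x y :: 'a
    by (simp_all add: zero_gcd_field.abs_eq plus_gcd_field.abs_eq times_gcd_field.abs_eq)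
  have of_hom: "of_gcd_field 0 = 0" "of_gcd_field (x + y) = of_gcd_field x + of_gcd_field y"
    "of_gcd_field (x * y) = of_gcd_field x * of_gcd_field y" for x y :: "'a gcd_field"
    by (transfer; simp)+
  have of_to_poly: "map_poly of_gcd_field (map_poly to_gcd_field u) = u" for u :: "'a poly"
    by (simp add: map_poly_map_poly to_hom of_hom comp_def to_gcd_field_inverse)
  have of_to_poly_poly: "?R (?F p) = p" for p :: "'a poly poly"
    by (simp add: map_poly_map_poly to_hom of_hom comp_def of_to_poly)
  have "?F g * ?F h = ?F ([:u:] * poly_y v)"
    unfolding assms(1)[symmetric] by (rule map_poly_poly_mult[symmetric]) (fact to_hom)+
  also have "\<dots> = [:map_poly to_gcd_field u:] * poly_y (map_poly to_gcd_field v)"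
    by (rule map_poly_poly_separated) (fact to_hom)+
  finally have "?F g * ?F h = [:map_poly to_gcd_field u:] * poly_y (map_poly to_gcd_field v)" .
  moreover have "map_poly to_gcd_field u \<noteq> 0" "map_poly to_gcd_field v \<noteq> 0"
    using assms(2,3) of_to_poly[of u] of_to_poly[of v] by auto
  ultimately obtain a b where "?F g = [:a:] * poly_y b"
    using factor_of_separated_field_gcd by blast
  then have "?R (?F g) = [:map_poly of_gcd_field a:] * poly_y (map_poly of_gcd_field b)"
    by (simp only: map_poly_poly_separated of_hom)
  then have "g = [:map_poly of_gcd_field a:] * poly_y (map_poly of_gcd_field b)"
    by (simp only: of_to_poly_poly)
  then show ?thesis
    using that by blast
qed

section \<open>Reciprocals and divisibility of separated polynomials\<close>

lemma coeff_coeff_recip: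
  "coeff (coeff (recip f) j) i =
     (if i \<le> degx f \<and> j \<le> degree f then coeff (coeff f (degree f - j)) (degx f - i) else 0)"
proof -
  let ?dx = "degx f" and ?dy = "degree f"
  have "coeff (coeff (recip f) j) i =
    (\<Sum>i'\<le>?dx. \<Sum>j'\<le>?dy. if j' = ?dy - j \<and> j \<le> ?dy \<and> i' = ?dx - i \<and> i \<le> ?dx
        then coeff (coeff f j') i' else 0)"
    unfolding recip_def coeff_sum by (intro sum.cong refl) (auto simp: coeff_monom)
  also have "\<dots> = (\<Sum>i'\<le>?dx. if i' = ?dx - i \<and> i \<le> ?dx \<and> j \<le> ?dy
        then coeff (coeff f (?dy - j)) i' else 0)"
    by (intro sum.cong refl) (auto simp: sum.delta' if_distrib cong: if_cong)
  also have "\<dots> = (if i \<le> ?dx \<and> j \<le> ?dy then coeff (coeff f (?dy - j)) (?dx - i) else 0)"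
    by (auto simp: sum.delta' cong: if_cong)
  finally show ?thesis .
qed

lemma degree_separated:
  "u \<noteq> 0 \<Longrightarrow> degree ([:u:] * poly_y v) = degree (v :: 'a::idom poly)"
  by (simp add: degree_smult_eq)

lemma degx_separated:
  fixes u v :: "'a::idom poly"
  assumes "u \<noteq> 0" "v \<noteq> 0"
  shows "degx ([:u:] * poly_y v) = degree u"
  unfolding degx_def degree_separated[OF assms(1)]
proof (rule Max_eqI)
  fix d assume "d \<in> (\<lambda>j. degree (coeff ([:u:] * poly_y v) j)) ` {..degree v}"
  then show "d \<le> degree u"
    by (auto simp del: mult_pCons_left simp: coeff_separated degree_smult_le)
next
  show "degree u \<in> (\<lambda>j. degree (coeff ([:u:] * poly_y v) j)) ` {..degree v}"
    using assms by (intro image_eqI[of _ _ "degree v"])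
      (auto simp del: mult_pCons_left simp: coeff_separated)
qed simp

lemma recip_separated:
  fixes u v :: "'a::idom poly"
  assumes "u \<noteq> 0" "v \<noteq> 0"
  shows "recip ([:u:] * poly_y v) = [:reflect_poly u:] * poly_y (reflect_poly v)"
proof (intro poly_eqI)
  fix i j
  show "coeff (coeff (recip ([:u:] * poly_y v)) j) i =
      coeff (coeff ([:reflect_poly u:] * poly_y (reflect_poly v)) j) i"
    unfolding coeff_coeff_recip degx_separated[OF assms] degree_separated[OF assms(1)]
    by (simp del: mult_pCons_left add: coeff_separated coeff_reflect_poly not_less)
qed

lemma const_dvd_separated_iff:
  fixes a u v :: "'a::field poly"
  assumes "v \<noteq> 0"
  shows "[:a:] dvd [:u:] * poly_y v \<longleftrightarrow> a dvd u"
proof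
  assume "[:a:] dvd [:u:] * poly_y v"
  then have "a dvd smult (lead_coeff v) u"
    by (simp del: mult_pCons_left add: const_poly_dvd_iff coeff_separated)
  then show "a dvd u"
    using assms by (simp add: dvd_smult_iff)
next
  assume "a dvd u"
  then have "[:a:] dvd [:u:]"
    by simp
  then show "[:a:] dvd [:u:] * poly_y v"
    by (rule dvd_mult2)
qed

lemma separated_dvd_iff:
  fixes u v u' v' :: "'a::field poly"
  assumes "u' \<noteq> 0" "v' \<noteq> 0"
  shows "[:u:] * poly_y v dvd [:u':] * poly_y v' \<longleftrightarrow> u dvd u' \<and> v dvd v'"
proof
  assume uv: "[:u:] * poly_y v dvd [:u':] * poly_y v'"
  then have "u dvd u'"
    using const_dvd_separated_iff[OF assms(2)] dvd_mult_left by blast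
  moreover have "[:v:] * poly_y u dvd [:v':] * poly_y u'"
    using uv by (metis dvdE dvd_triv_left swap_xy_mult swap_xy_separated)
  then have "v dvd v'"
    using const_dvd_separated_iff[OF assms(1)] dvd_mult_left by blast
  ultimately show "u dvd u' \<and> v dvd v'" ..
next
  assume "u dvd u' \<and> v dvd v'"
  then obtain k k' where "u' = u * k" "v' = v * k'"
    by (auto elim!: dvdE)
  then have "[:u':] * poly_y v' = ([:u:] * poly_y v) * ([:k:] * poly_y k')"
    by (simp only: separated_mult)
  then show "[:u:] * poly_y v dvd [:u':] * poly_y v'" ..
qed

text \<open>Uniqueness of division by a monic polynomial, modulo a constant \<open>c\<close>.\<close>

lemma const_dvd_of_dvd_monic_mult_add:
  fixes M T R :: "'a::idom poly"
  assumes "lead_coeff M = 1" "degree R < degree M" "[:c:] dvd T * M + R"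
  shows "[:c:] dvd T"
  using assms(3)
proof (induction "degree T" arbitrary: T rule: less_induct)
  case less
  show ?case
  proof (cases "T = 0")
    case False
    define t where "t = monom (lead_coeff T) (degree T)"
    have "coeff (T * M + R) (degree T + degree M) = lead_coeff T"
      using assms(1,2) by (simp add: coeff_mult_degree_sum coeff_eq_0)
    then have "c dvd lead_coeff T"
      using less.prems const_poly_dvd_iff by metis
    then have ct: "[:c:] dvd t"
      by (simp add: t_def const_poly_dvd_iff coeff_monom)
    have "(T - t) * M + R = (T * M + R) - t * M"
      by (simp add: algebra_simps)
    then have rest: "[:c:] dvd (T - t) * M + R"
      using less.prems ct by (metis dvd_diff dvd_mult2)
    have "coeff (T - t) n = 0" if "n \<ge> degree T" for n
      using that by (cases "n = degree T") (auto simp: t_def coeff_eq_0)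
    then have "T - t = 0 \<or> degree (T - t) < degree T"
      by (metis le_degree leading_coeff_0_iff not_le)
    then have "[:c:] dvd T - t"
      using less.hyps rest by auto
    then show ?thesis
      using ct by (metis diff_add_cancel dvd_add)
  qed simp
qed

lemma dvd_of_separated_congruence:
  fixes a u v q :: "'a::field poly"
  assumes "[:a:] dvd [:u:] * poly_y v + T * poly_y q"
    and "lead_coeff q = 1" "degree v < degree q" "v \<noteq> 0"
  shows "a dvd u"
proof -
  have "degree ([:u:] * poly_y v) < degree (poly_y q)"
    using assms(3) degree_mult_le[of "[:u:]" "poly_y v"] by simp
  moreover have "lead_coeff (poly_y q) = 1"
    using assms(2) by (simp add: coeff_poly_y one_pCons)
  ultimately have "[:a:] dvd T"
    using const_dvd_of_dvd_monic_mult_add assms(1) by (metis add.commute)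
  then have "[:a:] dvd [:u:] * poly_y v"
    using assms(1) by (metis dvd_add_left_iff dvd_mult2)
  then show ?thesis
    using const_dvd_separated_iff[OF assms(4)] by blast
qed

section \<open>The ideal \<open>\<langle>x^l - 1, y^m - 1\<rangle>\<close>\<close>

lemma Iset_0: "0 \<in> Iset l m"
  unfolding Iset_def by (intro CollectI exI[of _ 0]) simp

lemma Iset_diff: "x \<in> Iset l m \<Longrightarrow> y \<in> Iset l m \<Longrightarrow> x - y \<in> Iset l m"
proof -
  assume "x \<in> Iset l m" "y \<in> Iset l m"
  then obtain a b a' b' where x: "x = a * (bvx ^ l - 1) + b * (bvy ^ m - 1)"
    and y: "y = a' * (bvx ^ l - 1) + b' * (bvy ^ m - 1)"
    unfolding Iset_def by blast
  have "x - y = (a - a') * (bvx ^ l - 1) + (b - b') * (bvy ^ m - 1)"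
    unfolding x y by (simp add: algebra_simps)
  then show ?thesis
    unfolding Iset_def by blast
qed

lemma Iset_mult: "x \<in> Iset l m \<Longrightarrow> x * y \<in> Iset l m"
proof -
  assume "x \<in> Iset l m"
  then obtain a b where x: "x = a * (bvx ^ l - 1) + b * (bvy ^ m - 1)"
    unfolding Iset_def by blast
  have "x * y = (a * y) * (bvx ^ l - 1) + (b * y) * (bvy ^ m - 1)"
    unfolding x by (simp add: algebra_simps)
  then show ?thesis
    unfolding Iset_def by blast
qed

lemma cls_eq:
  assumes "p - q \<in> Iset l m"
  shows "cls l m p = cls l m q"
proof -
  have "p - x \<in> Iset l m \<longleftrightarrow> q - x \<in> Iset l m" for x
  proof
    assume "p - x \<in> Iset l m"
    from Iset_diff[OF this assms] show "q - x \<in> Iset l m"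
      by simp
  next
    assume "q - x \<in> Iset l m"
    from Iset_diff[OF this Iset_diff[OF Iset_0 assms]] show "p - x \<in> Iset l m"
      by simp
  qed
  then show ?thesis
    unfolding cls_def by blast
qed

lemma Rideal_eq_zero_if_mem_Iset:
  assumes "f \<in> Iset l m"
  shows "Rideal l m f = {cls l m 0}"
proof -
  have "cls l m (f * a) = cls l m 0" for a
    using Iset_mult[OF assms] by (intro cls_eq) simp
  then show ?thesis
    unfolding Rideal_def by auto
qed

lemma Rideal_subset_iff:
  "Rideal l m f \<subseteq> Rideal l m g \<longleftrightarrow> (\<exists>b. g * b - f \<in> Iset l m)"
proof
  assume "Rideal l m f \<subseteq> Rideal l m g"
  moreover have "cls l m f \<in> Rideal l m f"
    unfolding Rideal_def by (metis (mono_tags) mem_Collect_eq mult_1_right)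
  ultimately obtain b where "cls l m f = cls l m (g * b)"
    unfolding Rideal_def by blast
  moreover have "f \<in> cls l m f"
    by (simp add: cls_def Iset_0)
  ultimately show "\<exists>b. g * b - f \<in> Iset l m"
    by (auto simp: cls_def)
next
  assume "\<exists>b. g * b - f \<in> Iset l m"
  then obtain b where "g * b - f \<in> Iset l m" ..
  moreover have "g * (b * a) - f * a = (g * b - f) * a" for a
    by (simp add: algebra_simps)
  ultimately have "cls l m (g * (b * a)) = cls l m (f * a)" for a
    by (metis Iset_mult cls_eq)
  then show "Rideal l m f \<subseteq> Rideal l m g"
    unfolding Rideal_def by blast
qed

definition xpow_minus_one :: "nat \<Rightarrow> 'a::comm_ring_1 poly" where
  "xpow_minus_one n = monom 1 n - 1"

lemma coeff_xpow_minus_one: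
  "coeff (xpow_minus_one n) i = (if i = n then 1 else 0) - (if i = 0 then 1 else 0)"
  by (simp add: xpow_minus_one_def coeff_1)

lemma degree_xpow_minus_one:
  "n \<ge> 1 \<Longrightarrow> degree (xpow_minus_one n :: 'a::field poly) = n"
  by (intro antisym degree_le le_degree) (auto simp: coeff_xpow_minus_one)

lemma lead_coeff_xpow_minus_one:
  "n \<ge> 1 \<Longrightarrow> lead_coeff (xpow_minus_one n :: 'a::field poly) = 1"
  by (simp add: degree_xpow_minus_one coeff_xpow_minus_one)

lemma xpow_minus_one_neq_0:
  "n \<ge> 1 \<Longrightarrow> xpow_minus_one n \<noteq> (0 :: 'a::field poly)"
  by (metis lead_coeff_xpow_minus_one coeff_0 zero_neq_one)

lemma reflect_xpow_minus_one:
  "n \<ge> 1 \<Longrightarrow> reflect_poly (xpow_minus_one n :: 'a::field poly) = - xpow_minus_one n"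
  by (intro poly_eqI) (auto simp: coeff_reflect_poly degree_xpow_minus_one coeff_xpow_minus_one)

lemma bvx_pow_minus_one: "bvx ^ l - 1 = [:xpow_minus_one l:]"
  by (simp add: bvx_def xpow_minus_one_def monom_altdef poly_const_pow one_pCons)

lemma bvy_pow_minus_one: "bvy ^ m - 1 = poly_y (xpow_minus_one m)"
proof -
  have y: "poly_y [:0, 1:] = bvy"
    by (simp add: poly_y_def bvy_def map_poly_pCons)
  show ?thesis
    unfolding xpow_minus_one_def monom_altdef smult_1_left poly_y_diff poly_y_power poly_y_1 y ..
qed

lemma Iset_iff:
  "x \<in> Iset l m \<longleftrightarrow> (\<exists>s t. x = s * [:xpow_minus_one l:] + t * poly_y (xpow_minus_one m))"
  by (simp add: Iset_def bvx_pow_minus_one bvy_pow_minus_one)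

lemma separated_in_Iset:
  assumes "xpow_minus_one l dvd u \<or> xpow_minus_one m dvd v"
  shows "[:u:] * poly_y v \<in> Iset l m"
  using assms
proof
  assume "xpow_minus_one l dvd u"
  then obtain k where "u = xpow_minus_one l * k" ..
  then have "[:u:] * poly_y v =
      ([:k:] * poly_y v) * [:xpow_minus_one l:] + 0 * poly_y (xpow_minus_one m)"
    by (simp add: mult_ac)
  then show ?thesis
    unfolding Iset_iff by blast
next
  assume "xpow_minus_one m dvd v"
  then obtain k where "v = xpow_minus_one m * k" ..
  then have "[:u:] * poly_y v =
      0 * [:xpow_minus_one l:] + ([:u:] * poly_y k) * poly_y (xpow_minus_one m)"
    by (simp add: poly_y_mult mult_ac)
  then show ?thesis
    unfolding Iset_iff by blast
qed

lemma degree_reflect_less_or_dvd: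
  fixes b :: "'a::field poly"
  assumes "b dvd xpow_minus_one n" "n \<ge> 1"
  shows "degree (reflect_poly b) < n \<or> xpow_minus_one n dvd reflect_poly b"
proof (cases "degree b < n")
  case True
  then show ?thesis
    using degree_reflect_poly_le le_less_trans by blast
next
  case False
  obtain k where k: "xpow_minus_one n = b * k"
    using assms(1) ..
  then have "b \<noteq> 0" "k \<noteq> 0" "degree b + degree k = n"
    using assms(2) xpow_minus_one_neq_0 degree_xpow_minus_one by (metis degree_mult_eq mult_eq_0_iff)+
  with False obtain c where "k = [:c:]" "c \<noteq> 0"
    by (metis add_eq_self_zero degree_0_id le_antisym not_le le_add1 pCons_eq_0_iff)
  with k have "b = smult (inverse c) (xpow_minus_one n)"
    by simp
  with assms(2) have "reflect_poly b = smult (- inverse c) (xpow_minus_one n)"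
    by (simp add: reflect_xpow_minus_one reflect_poly_smult)
  then have "xpow_minus_one n dvd reflect_poly b"
    by (simp add: dvd_smult)
  then show ?thesis ..
qed

lemma mult_reflect_dvd_iff:
  fixes a a' :: "'a::field poly"
  assumes "a * a' = xpow_minus_one n" "n \<ge> 1"
  shows "a * reflect_poly a dvd xpow_minus_one n \<longleftrightarrow> a dvd reflect_poly a'"
proof -
  have "xpow_minus_one n = reflect_poly a * - reflect_poly a'"
    using assms by (simp add: reflect_xpow_minus_one flip: reflect_poly_mult)
  moreover have "reflect_poly a \<noteq> 0"
    using assms xpow_minus_one_neq_0 by force
  ultimately show ?thesis
    by (simp add: mult.commute[of a])
qed

lemma dvd_of_separated_mem_ideal:
  fixes a b u v :: "'a::field poly"
  assumes "[:a:] * poly_y b * w - [:u:] * poly_y v =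
      s * [:xpow_minus_one l:] + t * poly_y (xpow_minus_one m)"
    and "a dvd xpow_minus_one l" "v \<noteq> 0" "degree v < m"
  shows "a dvd u"
proof (rule dvd_of_separated_congruence)
  have "[:u:] * poly_y v + t * poly_y (xpow_minus_one m) =
      [:a:] * (poly_y b * w) - s * [:xpow_minus_one l:]"
    using assms(1) by (simp add: algebra_simps eq_diff_eq)
  moreover have "[:a:] dvd [:xpow_minus_one l:]"
    using assms(2) by simp
  ultimately show "[:a:] dvd [:u:] * poly_y v + t * poly_y (xpow_minus_one m)"
    by (metis dvd_diff dvd_mult dvd_triv_left)
  show "lead_coeff (xpow_minus_one m :: 'a poly) = 1"
    using assms(4) by (intro lead_coeff_xpow_minus_one) simp
  show "degree v < degree (xpow_minus_one m :: 'a poly)"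
    using assms(4) by (simp add: degree_xpow_minus_one)
qed (fact assms(3))

lemma separated_mem_ideal_iff:
  fixes a b u v :: "'a::field poly"
  assumes "a dvd xpow_minus_one l" "b dvd xpow_minus_one m"
    and "u \<noteq> 0" "v \<noteq> 0" "degree u < l" "degree v < m"
  shows "(\<exists>w. [:a:] * poly_y b * w - [:u:] * poly_y v \<in> Iset l m) \<longleftrightarrow> a dvd u \<and> b dvd v"
proof
  assume "\<exists>w. [:a:] * poly_y b * w - [:u:] * poly_y v \<in> Iset l m"
  then obtain w s t where st: "[:a:] * poly_y b * w - [:u:] * poly_y v =
      s * [:xpow_minus_one l:] + t * poly_y (xpow_minus_one m)"
    unfolding Iset_iff by blast
  then have "swap_xy ([:a:] * poly_y b * w - [:u:] * poly_y v) =
      swap_xy (s * [:xpow_minus_one l:] + t * poly_y (xpow_minus_one m))"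
    by simp
  then have "[:b:] * poly_y a * swap_xy w - [:v:] * poly_y u =
      swap_xy t * [:xpow_minus_one m:] + swap_xy s * poly_y (xpow_minus_one l)"
    by (simp only: swap_xy_diff swap_xy_add swap_xy_mult swap_xy_separated swap_xy_const
        swap_xy_poly_y)
      (simp only: mult_ac add_ac)
  with st show "a dvd u \<and> b dvd v"
    using assms dvd_of_separated_mem_ideal by metis
next
  assume "a dvd u \<and> b dvd v"
  then obtain k k' where "u = a * k" "v = b * k'"
    by (auto elim!: dvdE)
  then have "[:a:] * poly_y b * ([:k:] * poly_y k') - [:u:] * poly_y v = 0"
    by (simp only: separated_mult diff_self)
  then show "\<exists>w. [:a:] * poly_y b * w - [:u:] * poly_y v \<in> Iset l m"
    using Iset_0 by metis
qed

lemma separated_factorization: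
  fixes g h :: "'a::field poly poly"
  assumes "g * h = [:p:] * poly_y q" "p \<noteq> 0" "lead_coeff q = 1"
  obtains a b a' b' where "g = [:a:] * poly_y b" "h = [:a':] * poly_y b'"
    "a * a' = p" "b * b' = q"
proof -
  have q: "q \<noteq> 0"
    using assms(3) by auto
  obtain a b where g: "g = [:a:] * poly_y b"
    using factor_of_separated assms(1,2) q by blast
  obtain a1 b1 where h: "h = [:a1:] * poly_y b1"
    using factor_of_separated[of h g] assms(1,2) q by (metis mult.commute)
  have gh: "[:a * a1:] * poly_y (b * b1) = [:p:] * poly_y q"
    using assms(1) by (simp only: g h separated_mult)
  define c where "c = coeff (b * b1) (degree q)"
  have "smult c (a * a1) = p"
    using arg_cong[OF gh, of "\<lambda>f. coeff f (degree q)"] assms(3)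
    by (simp del: mult_pCons_left add: coeff_separated c_def)
  then have c: "c \<noteq> 0" and "a * smult c a1 = p"
    using assms(2) by auto
  moreover have "[:p:] * poly_y (b * smult (inverse c) b1) = [:p:] * poly_y q"
    using gh by (simp add: \<open>smult c (a * a1) = p\<close>[symmetric] poly_y_smult c)
  then have "b * smult (inverse c) b1 = q"
    using assms(2) by (simp del: mult_pCons_left)
  moreover have "h = [:smult c a1:] * poly_y (smult (inverse c) b1)"
    unfolding h using c by (simp add: poly_eq_iff coeff_poly_y)
  ultimately show ?thesis
    using that g by blast
qed

lemma separated_Rideal_subset_iff:
  fixes a b a' b' :: "'a::field poly"
  assumes aa': "a * a' = xpow_minus_one l" and bb': "b * b' = xpow_minus_one m"
    and lm: "l \<ge> 1" "m \<ge> 1"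
    and notin: "recip ([:a':] * poly_y b') \<notin> Iset l m"
  shows "Rideal l m (recip ([:a':] * poly_y b')) \<subseteq> Rideal l m ([:a:] * poly_y b) \<longleftrightarrow>
    a dvd reflect_poly a' \<and> b dvd reflect_poly b'"
proof -
  have factors: "a dvd xpow_minus_one l" "a' dvd xpow_minus_one l"
    "b dvd xpow_minus_one m" "b' dvd xpow_minus_one m"
    using aa' bb' by (metis dvd_triv_left dvd_triv_right)+
  have nonzero: "a' \<noteq> 0" "b' \<noteq> 0"
    using aa' bb' lm xpow_minus_one_neq_0 by fastforce+
  then have rh: "recip ([:a':] * poly_y b') = [:reflect_poly a':] * poly_y (reflect_poly b')"
    by (rule recip_separated)
  then have "\<not> xpow_minus_one l dvd reflect_poly a'" "\<not> xpow_minus_one m dvd reflect_poly b'"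
    using notin separated_in_Iset by metis+
  then have "degree (reflect_poly a') < l" "degree (reflect_poly b') < m"
    using degree_reflect_less_or_dvd factors(2,4) lm by blast+
  then show ?thesis
    unfolding Rideal_subset_iff rh
    by (intro separated_mem_ideal_iff) (use factors nonzero in auto)
qed

lemma separated_mult_recip_dvd_iff:
  fixes a b a' b' :: "'a::field poly"
  assumes aa': "a * a' = xpow_minus_one l" and bb': "b * b' = xpow_minus_one m"
    and lm: "l \<ge> 1" "m \<ge> 1"
  shows "[:a:] * poly_y b * recip ([:a:] * poly_y b) dvd
      [:xpow_minus_one l:] * poly_y (xpow_minus_one m) \<longleftrightarrow>
    a dvd reflect_poly a' \<and> b dvd reflect_poly b'"
proof -
  have a: "a \<noteq> 0" and b: "b \<noteq> 0"
    using aa' bb' lm xpow_minus_one_neq_0 by fastforce+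
  have "[:a:] * poly_y b * recip ([:a:] * poly_y b) =
      [:a * reflect_poly a:] * poly_y (b * reflect_poly b)"
    by (simp only: recip_separated[OF a b] separated_mult)
  also have "\<dots> dvd [:xpow_minus_one l:] * poly_y (xpow_minus_one m) \<longleftrightarrow>
      a * reflect_poly a dvd xpow_minus_one l \<and> b * reflect_poly b dvd xpow_minus_one m"
    by (rule separated_dvd_iff) (use xpow_minus_one_neq_0 lm in blast)+
  also have "\<dots> \<longleftrightarrow> a dvd reflect_poly a' \<and> b dvd reflect_poly b'"
    using aa' bb' lm by (simp add: mult_reflect_dvd_iff)
  finally show ?thesis .
qed

theorem mainTheorem4:
  fixes g h :: "'a::{field,finite} poly poly" and l m :: nat
  assumes "g \<noteq> 0" and "h \<noteq> 0"
    and "(bvx ^ l - 1) * (bvy ^ m - 1) = g * h"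
    and "Rideal l m g \<noteq> {cls l m 0}"
    and "Rideal l m (recip h) \<noteq> {cls l m 0}"
  shows "Rideal l m (recip h) \<subseteq> Rideal l m g \<longleftrightarrow>
         g * recip g dvd (bvx ^ l - 1) * (bvy ^ m - 1)"
proof -
  let ?P = "xpow_minus_one l :: 'a poly" and ?Q = "xpow_minus_one m :: 'a poly"
  have PQ: "(bvx ^ l - 1) * (bvy ^ m - 1) = [:?P:] * poly_y ?Q"
    by (simp only: bvx_pow_minus_one bvy_pow_minus_one)
  have lm: "l \<ge> 1" "m \<ge> 1"
    using assms(1-3) by (cases l; cases m; simp)+
  then obtain a b a' b' where g: "g = [:a:] * poly_y b" and h: "h = [:a':] * poly_y b'"
    and aa': "a * a' = ?P" and bb': "b * b' = ?Q"
    using separated_factorization[of g h ?P ?Q] assms(3) PQ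
    by (metis xpow_minus_one_neq_0 lead_coeff_xpow_minus_one)
  have notin: "recip ([:a':] * poly_y b') \<notin> Iset l m"
    using assms(5) Rideal_eq_zero_if_mem_Iset h by blast
  show ?thesis
    unfolding PQ g h
    by (simp only: separated_Rideal_subset_iff[OF aa' bb' lm notin]
        separated_mult_recip_dvd_iff[OF aa' bb' lm])
qed

end
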